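(* Let $A,B$ be disjoint sets of vertices of a graph $G$ and let $\mathcal{Q}$ be a collection of $k$ pairwise edge-disjoint $AB$-paths. Then the union of the members of $\mathcal{Q}$ contains a collection of $k$ pairwise edge-disjoint $AB$-paths which is aligned.
   Context: All graphs are finite and loopless but may have parallel edges. For disjoint $A,B\subseteq V(G)$, an $AB$-path is a path with one end in $A$ and the other end in $B$; it is written $x_1,x_2,\ldots,x_s$ with $x_1\in A$, $x_s\in B$. Two edge-disjoint $AB$-paths $Q_1=x_1,\ldots,x_s$ and $Q_2=y_1,\ldots,y_t$ which share two internal vertices $u=x_{i_1}=y_{j_1}$ and $v=x_{i_2}=y_{j_2}$ are aligned with respect to $u$ and $v$ if $(i_1-i_2)(j_1-j_2)>0$. Two such paths are aligned if they are aligned with respect to every pair of internal vertices in which they intersect; a collection of paths is aligned if its members are pairwise aligned. *)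

theory Defs
  imports Main
begin

definition multigraph :: "'v set \<Rightarrow> 'e set \<Rightarrow> ('e \<Rightarrow> 'v set) \<Rightarrow> bool" where
  "multigraph V E ends \<longleftrightarrow> finite V \<and> finite E \<and>
     (\<forall>e\<in>E. ends e \<subseteq> V \<and> card (ends e) = 2)"

text \<open>A path is a pair (xs, es): vertex sequence x_1..x_s (distinct) and the edges
  e_i joining x_i and x_(i+1).\<close>
type_synonym ('v,'e) path = "'v list \<times> 'e list"

definition is_path :: "'v set \<Rightarrow> 'e set \<Rightarrow> ('e \<Rightarrow> 'v set) \<Rightarrow> ('v,'e) path \<Rightarrow> bool" where
  "is_path V E ends P \<longleftrightarrow>
     (let xs = fst P; es = snd P in
        length xs = Suc (length es) \<and> distinct xs \<and> distinct es \<and> set xs \<subseteq> V \<and>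
        (\<forall>i < length es. es ! i \<in> E \<and> ends (es ! i) = {xs ! i, xs ! Suc i}))"

definition is_AB_path :: "'v set \<Rightarrow> 'e set \<Rightarrow> ('e \<Rightarrow> 'v set) \<Rightarrow> 'v set \<Rightarrow> 'v set \<Rightarrow> ('v,'e) path \<Rightarrow> bool" where
  "is_AB_path V E ends A B P \<longleftrightarrow>
     is_path V E ends P \<and> hd (fst P) \<in> A \<and> last (fst P) \<in> B"

definition edge_disjoint :: "('v,'e) path \<Rightarrow> ('v,'e) path \<Rightarrow> bool" where
  "edge_disjoint P Q \<longleftrightarrow> set (snd P) \<inter> set (snd Q) = {}"

text \<open>Internal positions of a path with s vertices are 1..s-2 (0-based).\<close>
definition internal_index :: "('v,'e) path \<Rightarrow> nat \<Rightarrow> bool" where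
  "internal_index P i \<longleftrightarrow> 0 < i \<and> Suc i < length (fst P)"

definition aligned :: "('v,'e) path \<Rightarrow> ('v,'e) path \<Rightarrow> bool" where
  "aligned P Q \<longleftrightarrow>
     (\<forall>i1 i2 j1 j2. internal_index P i1 \<and> internal_index P i2 \<and>
        internal_index Q j1 \<and> internal_index Q j2 \<and>
        fst P ! i1 = fst Q ! j1 \<and> fst P ! i2 = fst Q ! j2 \<and>
        fst P ! i1 \<noteq> fst P ! i2 \<longrightarrow>
        (int i1 - int i2) * (int j1 - int j2) > 0)"

end

theory Submission
  imports Defs
begin

text \<open>Among all systems of k pairwise edge-disjoint AB-paths in the union of the given
  paths, choose one of minimum total length. If two of its paths P and Q meet in vertices u, v
  in opposite orders, say u before v on P but v before u on Q, then P up to u followed by Q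
  after u, and Q up to v followed by P after v, are two edge-disjoint AB-walks that together
  miss the P-segment from u to v and the Q-segment from v to u. Shortcutting them to paths
  yields a system of strictly smaller total length.\<close>

fun walk :: "'e set \<Rightarrow> ('e \<Rightarrow> 'v set) \<Rightarrow> 'v list \<Rightarrow> 'e list \<Rightarrow> bool" where
  "walk E ends [x] [] = True"
| "walk E ends (x#y#xs) (e#es) = (e \<in> E \<and> ends e = {x,y} \<and> walk E ends (y#xs) es)"
| "walk E ends _ _ = False"

lemma walk_iff: "walk E ends xs es \<longleftrightarrow> length xs = Suc (length es) \<and>
   (\<forall>i<length es. es!i \<in> E \<and> ends (es!i) = {xs!i, xs!Suc i})"
  by (induction E ends xs es rule: walk.induct) (auto simp: All_less_Suc2)

lemma walk_Cons: "walk E ends (x#xs) (e#es) \<longleftrightarrow> xs \<noteq> [] \<and> e \<in> E \<and> ends e = {x, hd xs} \<and> walk E ends xs es"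
  by (cases xs) auto

lemma walk_Nil2: "walk E ends (x#xs) [] \<longleftrightarrow> xs = []"
  by (cases xs) auto

lemma walk_app: "walk E ends (as@[x]) es1 \<Longrightarrow> walk E ends (x#bs) es2 \<Longrightarrow> walk E ends (as@x#bs) (es1@es2)"
proof (induction as arbitrary: es1)
  case Nil
  then show ?case by (cases es1) (auto simp: walk_Cons)
next
  case (Cons a as)
  then show ?case by (cases es1) (auto simp: walk_Cons walk_Nil2 hd_append)
qed

lemma walk_take: "walk E ends xs es \<Longrightarrow> i \<le> length es \<Longrightarrow> walk E ends (take (Suc i) xs) (take i es)"
  by (auto simp: walk_iff)

lemma walk_drop: "walk E ends xs es \<Longrightarrow> i \<le> length es \<Longrightarrow> walk E ends (drop i xs) (drop i es)"
  by (auto simp: walk_iff)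

lemma walk_splice:
  assumes "walk E ends xs es" "walk E ends ys fs" "i < length xs" "j < length ys" "xs!i = ys!j"
  shows "walk E ends (take (Suc i) xs @ drop (Suc j) ys) (take i es @ drop j fs)"
proof -
  have l: "length xs = Suc (length es)" "length ys = Suc (length fs)" using assms by (auto simp: walk_iff)
  have "walk E ends (take i xs @ [xs!i]) (take i es)"
    using walk_take[OF assms(1), of i] assms l by (simp add: take_Suc_conv_app_nth)
  moreover have "walk E ends (ys!j # drop (Suc j) ys) (drop j fs)"
    using walk_drop[OF assms(2), of j] assms l by (simp add: Cons_nth_drop_Suc)
  ultimately have "walk E ends (take i xs @ ys!j # drop (Suc j) ys) (take i es @ drop j fs)"
    using assms(5) walk_app by metis
  then show ?thesis using assms by (simp add: take_Suc_conv_app_nth)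
qed

lemma last_splice:
  assumes "i < length xs" "j < length ys" "xs!i = ys!j"
  shows "last (take (Suc i) xs @ drop (Suc j) ys) = last ys"
proof (cases "Suc j < length ys")
  case True then show ?thesis by simp
next
  case False
  then have "j = length ys - 1" using assms by simp
  moreover have "ys \<noteq> []" using assms by auto
  ultimately show ?thesis using assms by (simp add: last_conv_nth[of ys] take_Suc_conv_app_nth)
qed

lemma hd_splice: "xs \<noteq> [] \<Longrightarrow> hd (take (Suc i) xs @ zs) = hd xs"
  by (cases xs) auto

lemma walk_shortcut_to_path:
  "walk E ends xs es \<Longrightarrow> distinct es \<Longrightarrow> \<exists>ys fs. walk E ends ys fs \<and> distinct ys \<and> distinct fs \<and>
     hd ys = hd xs \<and> last ys = last xs \<and> set ys \<subseteq> set xs \<and> set fs \<subseteq> set es \<and> length fs \<le> length es"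
proof (induction "length xs" arbitrary: xs es rule: less_induct)
  case less
  show ?case
  proof (cases "distinct xs")
    case True then show ?thesis using less.prems by blast
  next
    case False
    then obtain i j where ij: "i < j" "j < length xs" "xs!i = xs!j"
      by (metis distinct_conv_nth linorder_neqE_nat)
    have l: "length xs = Suc (length es)" using less.prems by (auto simp: walk_iff)
    define xs' where "xs' = take (Suc i) xs @ drop (Suc j) xs"
    define es' where "es' = take i es @ drop j es"
    have w: "walk E ends xs' es'" unfolding xs'_def es'_def
      using walk_splice[OF less.prems(1) less.prems(1)] ij by simp
    have d: "distinct es'" unfolding es'_def using less.prems(2) ij
      by (simp add: set_take_disj_set_drop_if_distinct)
    have len: "length xs' < length xs" unfolding xs'_def using ij by simp
    from less.hyps[OF len w d] obtain ys fs where
      r: "walk E ends ys fs \<and> distinct ys \<and> distinct fs \<and>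
     hd ys = hd xs' \<and> last ys = last xs' \<and> set ys \<subseteq> set xs' \<and> set fs \<subseteq> set es' \<and> length fs \<le> length es'"
      by blast
    have "xs \<noteq> []" using ij by auto
    have "hd xs' = hd xs" unfolding xs'_def using \<open>xs \<noteq> []\<close> by (rule hd_splice)
    moreover have "last xs' = last xs" unfolding xs'_def using ij by (intro last_splice) auto
    moreover have "set xs' \<subseteq> set xs" unfolding xs'_def by (auto dest: in_set_takeD in_set_dropD)
    moreover have "set es' \<subseteq> set es" unfolding es'_def by (auto dest: in_set_takeD in_set_dropD)
    moreover have "length es' \<le> length es" unfolding es'_def using ij l by simp
    ultimately show ?thesis using r by (metis order_trans)
  qed
qed

lemma is_path_iff_walk: "is_path V E ends P \<longleftrightarrow> walk E ends (fst P) (snd P) \<and> distinct (fst P) \<and> distinct (snd P) \<and> set (fst P) \<subseteq> V"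
  by (auto simp: is_path_def walk_iff Let_def)

lemma walk_not_Nil: "walk E ends xs es \<Longrightarrow> xs \<noteq> []"
  by (auto simp: walk_iff)

lemma AB_path_via_common_vertex:
  assumes P: "is_AB_path V E ends A B (xs,es)" and Q: "is_AB_path V E ends A B (ys,fs)"
    and dis: "set es \<inter> set fs = {}"
    and "a < length xs" "d < length ys" "xs!a = ys!d"
  shows "\<exists>P'. is_AB_path V E ends A B P' \<and> set (snd P') \<subseteq> set (take a es) \<union> set (drop d fs)
     \<and> length (snd P') \<le> a + (length fs - d)"
proof -
  have wP: "walk E ends xs es" "distinct es" "set xs \<subseteq> V" "hd xs \<in> A" using P by (auto simp: is_AB_path_def is_path_iff_walk)
  have wQ: "walk E ends ys fs" "distinct fs" "set ys \<subseteq> V" "last ys \<in> B" using Q by (auto simp: is_AB_path_def is_path_iff_walk)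
  have l: "length xs = Suc (length es)" "length ys = Suc (length fs)" using wP wQ by (auto simp: walk_iff)
  define ws where "ws = take (Suc a) xs @ drop (Suc d) ys"
  define gs where "gs = take a es @ drop d fs"
  have w: "walk E ends ws gs" unfolding ws_def gs_def using walk_splice[OF wP(1) wQ(1)] assms by simp
  have dg: "distinct gs" unfolding gs_def using wP(2) wQ(2) dis
    by (auto dest: in_set_takeD in_set_dropD)
  from walk_shortcut_to_path[OF w dg] obtain zs hs where r: "walk E ends zs hs" "distinct zs" "distinct hs"
     "hd zs = hd ws" "last zs = last ws" "set zs \<subseteq> set ws" "set hs \<subseteq> set gs" "length hs \<le> length gs" by blast
  have "hd ws = hd xs" unfolding ws_def using walk_not_Nil[OF wP(1)] by (rule hd_splice)
  moreover have "last ws = last ys" unfolding ws_def using assms by (intro last_splice) auto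
  moreover have "set ws \<subseteq> V" unfolding ws_def using wP(3) wQ(3) by (auto dest: in_set_takeD in_set_dropD)
  moreover have "length gs = min a (length es) + (length fs - d)" unfolding gs_def by simp
  ultimately show ?thesis using r wP wQ
    by (intro exI[of _ "(zs,hs)"]) (auto simp: is_AB_path_def is_path_iff_walk gs_def)
qed

lemma uncross_AB_paths:
  assumes P: "is_AB_path V E ends A B (xs,es)" and Q: "is_AB_path V E ends A B (ys,fs)"
    and dis: "set es \<inter> set fs = {}"
    and ab: "a < b" "b < length xs" and cd: "c < d" "d < length ys" and eq: "xs!a = ys!d" "xs!b = ys!c"
  shows "\<exists>P' Q'. is_AB_path V E ends A B P' \<and> is_AB_path V E ends A B Q' \<and>
     set (snd P') \<union> set (snd Q') \<subseteq> set es \<union> set fs \<and> set (snd P') \<inter> set (snd Q') = {} \<and>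
     length (snd P') + length (snd Q') < length es + length fs"
proof -
  have wP: "distinct es" "length xs = Suc (length es)" using P by (auto simp: is_AB_path_def is_path_iff_walk walk_iff)
  have wQ: "distinct fs" "length ys = Suc (length fs)" using Q by (auto simp: is_AB_path_def is_path_iff_walk walk_iff)
  have a_l: "a < length xs" and c_l: "c < length ys" using ab cd by auto
  have dis': "set fs \<inter> set es = {}" using dis by blast
  have eq': "ys!c = xs!b" using eq by simp
  obtain P' where p: "is_AB_path V E ends A B P'" "set (snd P') \<subseteq> set (take a es) \<union> set (drop d fs)"
     "length (snd P') \<le> a + (length fs - d)"
    using AB_path_via_common_vertex[OF P Q dis a_l cd(2) eq(1)] by blast
  obtain Q' where q: "is_AB_path V E ends A B Q'" "set (snd Q') \<subseteq> set (take c fs) \<union> set (drop b es)"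
     "length (snd Q') \<le> c + (length es - b)"
    using AB_path_via_common_vertex[OF Q P dis' c_l ab(2) eq'] by blast
  have d1: "set (take a es) \<inter> set (drop b es) = {}" using wP ab by (simp add: set_take_disj_set_drop_if_distinct)
  have d2: "set (take c fs) \<inter> set (drop d fs) = {}" using wQ cd by (simp add: set_take_disj_set_drop_if_distinct)
  have e1: "set (take a es) \<inter> set (take c fs) = {}" using dis by (auto dest: in_set_takeD)
  have e2: "set (drop d fs) \<inter> set (drop b es) = {}" using dis by (auto dest: in_set_dropD)
  have "set (snd P') \<inter> set (snd Q') = {}"
    using p(2) q(2) d1 d2 e1 e2 by blast
  moreover have "set (snd P') \<union> set (snd Q') \<subseteq> set es \<union> set fs" using p(2) q(2)
    by (auto dest: in_set_takeD in_set_dropD)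
  moreover have "length (snd P') + length (snd Q') < length es + length fs"
    using p(3) q(3) ab cd wP wQ by linarith
  ultimately show ?thesis using p q by blast
qed

definition edge_disjoint_AB_paths ::
    "'v set \<Rightarrow> 'e set \<Rightarrow> ('e \<Rightarrow> 'v set) \<Rightarrow> 'v set \<Rightarrow> 'v set \<Rightarrow> nat \<Rightarrow> (nat \<Rightarrow> ('v,'e) path) \<Rightarrow> bool" where
  "edge_disjoint_AB_paths V E ends A B k R \<longleftrightarrow>
     (\<forall>i<k. is_AB_path V E ends A B (R i)) \<and> (\<forall>i<k. \<forall>j<k. i \<noteq> j \<longrightarrow> edge_disjoint (R i) (R j))"

definition total_length :: "nat \<Rightarrow> (nat \<Rightarrow> ('v,'e) path) \<Rightarrow> nat" where
  "total_length k R = (\<Sum>i<k. length (snd (R i)))"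

lemma not_aligned_crossing:
  assumes "\<not> aligned (xs, es) (ys, fs)"
  obtains a b c d where "a < b" "b < length xs" "c < d" "d < length ys"
    "xs ! a = ys ! d" "xs ! b = ys ! c"
proof -
  obtain i1 i2 j1 j2 where bnd: "i1 < length xs" "i2 < length xs" "j1 < length ys" "j2 < length ys"
    and eq: "xs ! i1 = ys ! j1" "xs ! i2 = ys ! j2" "xs ! i1 \<noteq> xs ! i2"
    and sign: "(int i1 - int i2) * (int j1 - int j2) \<le> 0"
    using assms unfolding aligned_def internal_index_def by (metis Suc_lessD fst_conv not_less)
  have "i1 \<noteq> i2" "j1 \<noteq> j2" using eq by auto
  with sign have "i1 < i2 \<and> j2 < j1 \<or> i2 < i1 \<and> j1 < j2"
    by (auto simp: linorder_neq_iff mult_le_0_iff)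
  then show ?thesis
  proof
    assume "i1 < i2 \<and> j2 < j1"
    then show ?thesis using that[of i1 i2 j2 j1] bnd eq by simp
  next
    assume "i2 < i1 \<and> j1 < j2"
    then show ?thesis using that[of i2 i1 j1 j2] bnd eq by simp
  qed
qed

lemma edge_disjoint_update2:
  assumes "\<forall>l<k. \<forall>l'<k. l \<noteq> l' \<longrightarrow> edge_disjoint (R l) (R l')"
    and "i < k" "j < k" "i \<noteq> j" "edge_disjoint P Q"
    and "set (snd P) \<union> set (snd Q) \<subseteq> set (snd (R i)) \<union> set (snd (R j))"
  shows "\<forall>l<k. \<forall>l'<k. l \<noteq> l' \<longrightarrow> edge_disjoint ((R(i := P, j := Q)) l) ((R(i := P, j := Q)) l')"
  using assms unfolding edge_disjoint_def by (simp, blast)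

lemma total_length_update2:
  assumes "i < k" "j < k" "i \<noteq> j"
  shows "total_length k (R(i := P, j := Q)) + length (snd (R i)) + length (snd (R j))
       = total_length k R + length (snd P) + length (snd Q)"
proof -
  have split: "total_length k S = length (snd (S i)) + length (snd (S j))
                 + (\<Sum>l\<in>{..<k} - {i} - {j}. length (snd (S l)))" for S :: "nat \<Rightarrow> ('v,'e) path"
    using assms unfolding total_length_def
    by (simp add: sum.remove[of "{..<k}" i] sum.remove[of "{..<k} - {i}" j])
  have "(\<Sum>l\<in>{..<k} - {i} - {j}. length (snd ((R(i := P, j := Q)) l)))
      = (\<Sum>l\<in>{..<k} - {i} - {j}. length (snd (R l)))"
    by (rule sum.cong) auto
  then show ?thesis
    using split[of R] split[of "R(i := P, j := Q)"] assms by simp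
qed

lemma minimal_edge_disjoint_AB_paths_aligned:
  assumes R: "edge_disjoint_AB_paths V E ends A B k R"
    and min: "\<And>R'. edge_disjoint_AB_paths V E ends A B k R' \<Longrightarrow> total_length k R \<le> total_length k R'"
    and ij: "i < k" "j < k" "i \<noteq> j"
  shows "aligned (R i) (R j)"
proof (rule ccontr)
  assume not_aligned: "\<not> aligned (R i) (R j)"
  obtain xs es ys fs where Ri: "R i = (xs, es)" and Rj: "R j = (ys, fs)" by fastforce
  have paths: "is_AB_path V E ends A B (xs, es)" "is_AB_path V E ends A B (ys, fs)"
    and dis: "set es \<inter> set fs = {}"
    using R ij Ri Rj unfolding edge_disjoint_AB_paths_def edge_disjoint_def by (metis fst_conv snd_conv)+
  obtain a b c d where "a < b" "b < length xs" "c < d" "d < length ys"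
    "xs ! a = ys ! d" "xs ! b = ys ! c"
    using not_aligned_crossing not_aligned Ri Rj by metis
  then obtain P' Q' where P'Q': "is_AB_path V E ends A B P'" "is_AB_path V E ends A B Q'"
    "set (snd P') \<union> set (snd Q') \<subseteq> set es \<union> set fs" "edge_disjoint P' Q'"
    "length (snd P') + length (snd Q') < length es + length fs"
    using uncross_AB_paths[OF paths dis] unfolding edge_disjoint_def by blast
  let ?R' = "R(i := P', j := Q')"
  have "edge_disjoint_AB_paths V E ends A B k ?R'"
    using R P'Q' ij Ri Rj edge_disjoint_update2[of k R i j P' Q']
    unfolding edge_disjoint_AB_paths_def by auto
  moreover have "total_length k ?R' < total_length k R"
    using total_length_update2[OF ij, of R P' Q'] P'Q'(5) Ri Rj by simp
  ultimately show False
    using min by (simp add: not_le[symmetric])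
qed

lemma is_AB_path_restrict:
  assumes "is_AB_path V E ends A B (xs, es)" "set xs \<subseteq> V'" "set es \<subseteq> E'"
  shows "is_AB_path V' E' ends A B (xs, es)"
  using assms unfolding is_AB_path_def is_path_def Let_def by (auto intro: nth_mem)

text \<open>Only the edge-disjointness of the given paths matters.\<close>
theorem lemma7p1:
  fixes V :: "'v set" and E :: "'e set" and ends :: "'e \<Rightarrow> 'v set"
    and A B :: "'v set" and k :: nat and Q :: "nat \<Rightarrow> ('v,'e) path"
  assumes "multigraph V E ends"
    and "A \<subseteq> V" and "B \<subseteq> V" and "A \<inter> B = {}"
    and "\<forall>i<k. is_AB_path V E ends A B (Q i)"
    and "\<forall>i<k. \<forall>j<k. i \<noteq> j \<longrightarrow> edge_disjoint (Q i) (Q j)"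
  shows "\<exists>R :: nat \<Rightarrow> ('v,'e) path.
           (\<forall>i<k. is_AB_path (\<Union>j<k. set (fst (Q j))) (\<Union>j<k. set (snd (Q j))) ends A B (R i)) \<and>
           (\<forall>i<k. \<forall>j<k. i \<noteq> j \<longrightarrow> edge_disjoint (R i) (R j)) \<and>
           (\<forall>i<k. \<forall>j<k. i \<noteq> j \<longrightarrow> aligned (R i) (R j))"
proof -
  let ?V = "\<Union>j<k. set (fst (Q j))" and ?E = "\<Union>j<k. set (snd (Q j))"
  let ?good = "edge_disjoint_AB_paths ?V ?E ends A B k"
  have "is_AB_path ?V ?E ends A B (Q i)" if "i < k" for i
    using assms(5) that is_AB_path_restrict[of V E ends A B "fst (Q i)" "snd (Q i)" ?V ?E] by auto
  then have "?good Q"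
    using assms(6) unfolding edge_disjoint_AB_paths_def by blast
  then obtain R where "?good R" and "\<And>R'. ?good R' \<Longrightarrow> total_length k R \<le> total_length k R'"
    using ex_has_least_nat[of ?good Q "total_length k"] by blast
  then show ?thesis
    using minimal_edge_disjoint_AB_paths_aligned[of ?V ?E ends A B k R]
    unfolding edge_disjoint_AB_paths_def by blast
qed

end
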